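(* Let $S$ be a meet semilattice and let $2\leq k\leq\omega$. The following are equivalent: (1) $\exists$ has an $\omega$-strategy in the $(m,k)$-game on $S$ with starting position $(\{a\},\{b\})$ for all $a,b\in S$ with $a\not\leq b$ and for all $2\leq m\leq\omega$; (2) $\exists$ has a $5$-strategy in the $(3,k)$-game on $S$ with starting position $(\{a\},\{b\})$ for all $a,b\in S$ with $a\not\leq b$; (3) $S$ is $k$-distributive.
   Context: Work in ZFC. A meet semilattice $S$ is regarded as a poset. $S$ is $k$-distributive if for all $m<k$ and all $x,y_1,\ldots,y_m\in S$, whenever $x\wedge(y_1\vee\cdots\vee y_m)$ exists in $S$, then $(x\wedge y_1)\vee\cdots\vee(x\wedge y_m)$ also exists in $S$ and the two are equal. For a poset $P$, $2\leq\alpha,\beta\leq\omega$ and $U_0,V\subseteq P$, the $(\alpha,\beta)$-game with starting position $(U_0,V)$ is played between $\forall$ and $\exists$ in rounds $0,1,2,\ldots$; a set $U$ is maintained, initially $U_0$, with $V$ fixed. Each round $\forall$ moves and $\exists$ responds: (1) if $b\geq a$ for some $a\in U$, $\forall$ may play $(b)$ and $\exists$ must add $b$ to $U$; (2) if $A\subseteq U$ with $|A|<\alpha$ and $\bigwedge A$ exists in $P$, $\forall$ may play $A$ and $\exists$ must add $\bigwedge A$ to $U$; (3) if $B\subseteq P$ with $|B|<\beta$ and $\bigvee B$ exists in $P$ and lies in $U$, $\forall$ may play $B$ and $\exists$ must choose some $b\in B$ and add it to $U$. $\forall$ wins in round $n$ if $U\cap V\neq\emptyset$ at the beginning of round $n$.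 $\exists$ has an $n$-strategy if she can guarantee that $\forall$ does not win until at least round $n+1$, and an $\omega$-strategy if she can guarantee that $\forall$ never wins. *)

theory Defs
  imports Main "HOL-Library.Extended_Nat"
begin

definition is_meet_of :: "'a::order set \<Rightarrow> 'a \<Rightarrow> bool" where
  "is_meet_of A c \<longleftrightarrow> (\<forall>a\<in>A. c \<le> a) \<and> (\<forall>y. (\<forall>a\<in>A. y \<le> a) \<longrightarrow> y \<le> c)"

definition is_join_of :: "'a::order set \<Rightarrow> 'a \<Rightarrow> bool" where
  "is_join_of B s \<longleftrightarrow> (\<forall>b\<in>B. b \<le> s) \<and> (\<forall>y. (\<forall>b\<in>B. b \<le> y) \<longrightarrow> s \<le> y)"

text \<open>|A| < alpha for a cardinal alpha with 2 <= alpha <= omega, alpha represented as an enat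
  (infinity = omega).\<close>
definition card_less :: "'a set \<Rightarrow> enat \<Rightarrow> bool" where
  "card_less A \<alpha> \<longleftrightarrow> finite A \<and> enat (card A) < \<alpha>"

definition k_distributive :: "enat \<Rightarrow> 'a::semilattice_inf itself \<Rightarrow> bool" where
  "k_distributive k TYPE('a) \<longleftrightarrow>
     (\<forall>m::nat. enat m < k \<longrightarrow> (\<forall>(x::'a) (y::nat \<Rightarrow> 'a) s.
        is_join_of {y i | i. i < m} s \<longrightarrow> is_join_of {inf x (y i) | i. i < m} (inf x s)))"

text \<open>The moves available to forall in position U: each move is represented by the set of
  positions among which exists may choose her response (a singleton for forced moves (1),(2)).\<close>
definition game_moves :: "enat \<Rightarrow> enat \<Rightarrow> 'a::order set \<Rightarrow> 'a set set set" where
  "game_moves \<alpha> \<beta> U =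
     {{insert b U} | b. \<exists>a\<in>U. a \<le> b}
   \<union> {{insert c U} | A c. A \<subseteq> U \<and> card_less A \<alpha> \<and> is_meet_of A c}
   \<union> {{insert b U | b. b \<in> B} | B s. card_less B \<beta> \<and> is_join_of B s \<and> s \<in> U}"

text \<open>n_strategy alpha beta V n U: exists can guarantee that U meets V at the beginning of none
  of the rounds 0..n, starting from position U.\<close>
fun n_strategy :: "enat \<Rightarrow> enat \<Rightarrow> 'a::order set \<Rightarrow> nat \<Rightarrow> 'a set \<Rightarrow> bool" where
  "n_strategy \<alpha> \<beta> V 0 U \<longleftrightarrow> U \<inter> V = {}"
| "n_strategy \<alpha> \<beta> V (Suc n) U \<longleftrightarrow> U \<inter> V = {} \<and>
     (\<forall>M\<in>game_moves \<alpha> \<beta> U. \<exists>U'\<in>M. n_strategy \<alpha> \<beta> V n U')"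

text \<open>omega_strategy alpha beta V U: exists can guarantee that forall never wins
  (greatest fixed point: the game may go on forever).\<close>
coinductive omega_strategy :: "enat \<Rightarrow> enat \<Rightarrow> 'a::order set \<Rightarrow> 'a set \<Rightarrow> bool"
  for \<alpha> \<beta> V where
  "U \<inter> V = {} \<Longrightarrow> (\<forall>M\<in>game_moves \<alpha> \<beta> U. \<exists>U'\<in>M. omega_strategy \<alpha> \<beta> V U')
   \<Longrightarrow> omega_strategy \<alpha> \<beta> V U"

end

theory Submission
  imports Defs
begin

(* (3) implies (1): for a not below b, Zorn's lemma gives a filter F that is maximal among
   the filters containing a and avoiding b. Under k-distributivity F is k-prime: if the join
   s of fewer than k elements y lies in F but no y does, maximality yields f_y in F with
   inf f_y y <= b for every y; for a common lower bound d in F of s and all f_y,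
   distributivity makes d = inf d s the join of the elements inf d y <= b, so b is in F.
   Being upward closed, closed under finite meets and prime, F contains an answer to every
   move of the game, so exists survives forever by keeping the position inside F.

   (1) implies (2) trivially. (2) implies (3): if u bounds every inf x y_i but not inf x s,
   where s is the join of the y_i, then from ({inf x s}, {u}) forall wins within five
   rounds: he adds x and s (both above inf x s), plays the join of the y_i, takes the meet
   of x with the chosen y_j, and finally adds u, which is above inf x y_j. *)

lemma game_moves_upI: "a \<in> U \<Longrightarrow> a \<le> b \<Longrightarrow> {insert b U} \<in> game_moves \<alpha> \<beta> U"
  unfolding game_moves_def by blast

lemma game_moves_meetI:
  "A \<subseteq> U \<Longrightarrow> card_less A \<alpha> \<Longrightarrow> is_meet_of A c \<Longrightarrow> {insert c U} \<in> game_moves \<alpha> \<beta> U"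
  unfolding game_moves_def by blast

lemma game_moves_joinI:
  "card_less B \<beta> \<Longrightarrow> is_join_of B s \<Longrightarrow> s \<in> U
    \<Longrightarrow> {insert b U | b. b \<in> B} \<in> game_moves \<alpha> \<beta> U"
  unfolding game_moves_def by blast

lemma game_movesE:
  assumes "M \<in> game_moves \<alpha> \<beta> U"
  obtains (up) a b where "a \<in> U" "a \<le> b" "M = {insert b U}"
  | (meet) A c where "A \<subseteq> U" "card_less A \<alpha>" "is_meet_of A c" "M = {insert c U}"
  | (join) B s where "card_less B \<beta>" "is_join_of B s" "s \<in> U" "M = {insert b U | b. b \<in> B}"
  using assms unfolding game_moves_def
  by (elim UnE CollectE exE conjE bexE) (simp_all add: that)

lemma omega_strategy_imp_n_strategy:
  "omega_strategy \<alpha> \<beta> V U \<Longrightarrow> n_strategy \<alpha> \<beta> V n U"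
proof (induction n arbitrary: U)
  case 0
  then show ?case by (auto elim: omega_strategy.cases)
next
  case (Suc n)
  from Suc.prems show ?case
    by (cases rule: omega_strategy.cases) (simp, meson Suc.IH)
qed

lemma omega_strategy_invariant:
  assumes "P U"
    and disjoint: "\<And>U. P U \<Longrightarrow> U \<inter> V = {}"
    and preserved: "\<And>U M. P U \<Longrightarrow> M \<in> game_moves \<alpha> \<beta> U \<Longrightarrow> \<exists>U'\<in>M. P U'"
  shows "omega_strategy \<alpha> \<beta> V U"
  using \<open>P U\<close>
proof (rule omega_strategy.coinduct[of P])
  fix U assume "P U"
  then have "\<forall>M\<in>game_moves \<alpha> \<beta> U. \<exists>U'\<in>M. P U' \<or> omega_strategy \<alpha> \<beta> V U'"
    using preserved by blast
  then show "\<exists>U'. U = U' \<and> U' \<inter> V = {} \<and>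
      (\<forall>M\<in>game_moves \<alpha> \<beta> U'. \<exists>U''\<in>M. P U'' \<or> omega_strategy \<alpha> \<beta> V U'')"
    using disjoint \<open>P U\<close> by blast
qed

lemma n_strategy_respond:
  "n_strategy \<alpha> \<beta> V n U \<Longrightarrow> M \<in> game_moves \<alpha> \<beta> U \<Longrightarrow> n = Suc n'
    \<Longrightarrow> \<exists>U'\<in>M. n_strategy \<alpha> \<beta> V n' U'"
  by simp

lemma n_strategy_forced:
  "n_strategy \<alpha> \<beta> V n U \<Longrightarrow> {U'} \<in> game_moves \<alpha> \<beta> U \<Longrightarrow> n = Suc n'
    \<Longrightarrow> n_strategy \<alpha> \<beta> V n' U'"
  using n_strategy_respond by fastforce

lemma k_distributive_iff:
  "k_distributive k TYPE('a::semilattice_inf) \<longleftrightarrow>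
     (\<forall>(x::'a) B s. card_less B k \<longrightarrow> is_join_of B s \<longrightarrow> is_join_of (inf x ` B) (inf x s))"
proof
  assume dist: "k_distributive k TYPE('a)"
  show "\<forall>(x::'a) B s. card_less B k \<longrightarrow> is_join_of B s \<longrightarrow> is_join_of (inf x ` B) (inf x s)"
  proof (intro allI impI)
    fix x :: 'a and B :: "'a set" and s :: 'a
    assume "card_less B k" "is_join_of B s"
    then have "finite B" and "enat (card B) < k" unfolding card_less_def by auto
    then obtain h n where B: "B = h ` {..<n}" and "enat n < k"
      using ex_bij_betw_nat_finite by (metis atLeast0LessThan bij_betw_imp_surj_on)
    then have "is_join_of {h i | i. i < n} s \<longrightarrow> is_join_of {inf x (h i) | i. i < n} (inf x s)"
      using dist unfolding k_distributive_def by blast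
    moreover have "{h i | i. i < n} = B" "{inf x (h i) | i. i < n} = inf x ` B"
      unfolding B by auto
    ultimately show "is_join_of (inf x ` B) (inf x s)"
      using \<open>is_join_of B s\<close> by simp
  qed
next
  assume dist: "\<forall>(x::'a) B s. card_less B k \<longrightarrow> is_join_of B s \<longrightarrow> is_join_of (inf x ` B) (inf x s)"
  show "k_distributive k TYPE('a)"
    unfolding k_distributive_def
  proof (intro allI impI)
    fix m :: nat and x :: 'a and y :: "nat \<Rightarrow> 'a" and s :: 'a
    assume "enat m < k" "is_join_of {y i | i. i < m} s"
    moreover have "{y i | i. i < m} = y ` {..<m}" "{inf x (y i) | i. i < m} = inf x ` y ` {..<m}"
      by auto
    moreover have "enat (card (y ` {..<m})) \<le> enat m"
      using card_image_le[of "{..<m}" y] by simp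
    then have "card_less (y ` {..<m}) k"
      using le_less_trans \<open>enat m < k\<close> unfolding card_less_def by blast
    ultimately show "is_join_of {inf x (y i) | i. i < m} (inf x s)"
      using dist by simp
  qed
qed

definition meet_filter :: "'a::semilattice_inf set \<Rightarrow> bool" where
  "meet_filter F \<longleftrightarrow> (\<forall>x\<in>F. \<forall>y. x \<le> y \<longrightarrow> y \<in> F) \<and> (\<forall>x\<in>F. \<forall>y\<in>F. inf x y \<in> F)"

lemma meet_filterD:
  "meet_filter F \<Longrightarrow> x \<in> F \<Longrightarrow> x \<le> y \<Longrightarrow> y \<in> F"
  "meet_filter F \<Longrightarrow> x \<in> F \<Longrightarrow> y \<in> F \<Longrightarrow> inf x y \<in> F"
  unfolding meet_filter_def by blast+

lemma meet_filter_lower_bound: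
  assumes "meet_filter F" "F \<noteq> {}" "finite A" "A \<subseteq> F"
  shows "\<exists>d\<in>F. \<forall>x\<in>A. d \<le> x"
  using assms(3,4)
proof (induction A rule: finite_induct)
  case empty
  then show ?case using \<open>F \<noteq> {}\<close> by blast
next
  case (insert x A)
  then obtain d where "d \<in> F" "\<forall>z\<in>A. d \<le> z" by auto
  moreover have "inf x d \<in> F" using insert.prems \<open>d \<in> F\<close> meet_filterD(2)[OF assms(1)] by blast
  ultimately show ?case by (intro bexI[of _ "inf x d"]) (auto intro: le_infI2)
qed

lemma meet_filter_finite_meet:
  assumes "meet_filter F" "F \<noteq> {}" "finite A" "A \<subseteq> F" "is_meet_of A c"
  shows "c \<in> F"
proof -
  obtain d where "d \<in> F" "\<forall>x\<in>A. d \<le> x"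
    using meet_filter_lower_bound assms(1-4) by blast
  moreover from this assms(5) have "d \<le> c" unfolding is_meet_of_def by blast
  ultimately show ?thesis using meet_filterD(1)[OF assms(1)] by blast
qed

lemma meet_filter_Union_chain:
  assumes "\<And>F. F \<in> C \<Longrightarrow> meet_filter F" "chain\<^sub>\<subseteq> C"
  shows "meet_filter (\<Union>C)"
  unfolding meet_filter_def
proof (intro conjI ballI allI impI)
  show "y \<in> \<Union>C" if "x \<in> \<Union>C" "x \<le> y" for x y
    using that assms(1) meet_filterD(1) by blast
  show "inf x y \<in> \<Union>C" if xy: "x \<in> \<Union>C" "y \<in> \<Union>C" for x y
  proof -
    obtain X Y where XY: "X \<in> C" "Y \<in> C" "x \<in> X" "y \<in> Y" using xy by blast
    with assms(2) have "X \<subseteq> Y \<or> Y \<subseteq> X" unfolding chain_subset_def by blast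
    with XY assms(1)[of X] assms(1)[of Y] show ?thesis using meet_filterD(2) by blast
  qed
qed

lemma meet_filter_extend:
  assumes "meet_filter F"
  shows "meet_filter {z. \<exists>f\<in>F. inf f y \<le> z}"
  unfolding meet_filter_def
proof (intro conjI ballI allI impI)
  show "z' \<in> {z. \<exists>f\<in>F. inf f y \<le> z}" if z: "z \<in> {z. \<exists>f\<in>F. inf f y \<le> z}" "z \<le> z'" for z z'
  proof -
    obtain f where "f \<in> F" "inf f y \<le> z" using z(1) by blast
    with z(2) show ?thesis using order.trans by blast
  qed
  show "inf z z' \<in> {z. \<exists>f\<in>F. inf f y \<le> z}"
    if zz': "z \<in> {z. \<exists>f\<in>F. inf f y \<le> z}" "z' \<in> {z. \<exists>f\<in>F. inf f y \<le> z}" for z z'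
  proof -
    obtain f f' where "f \<in> F" "f' \<in> F" "inf f y \<le> z" "inf f' y \<le> z'" using zz' by blast
    moreover have "inf (inf f f') y \<le> inf f y" "inf (inf f f') y \<le> inf f' y"
      by (rule inf_mono; simp)+
    ultimately have "inf (inf f f') y \<le> inf z z'"
      by (meson le_inf_iff order.trans)
    moreover have "inf f f' \<in> F"
      using meet_filterD(2)[OF assms \<open>f \<in> F\<close> \<open>f' \<in> F\<close>] .
    ultimately show ?thesis by blast
  qed
qed

definition maximal_filter_avoiding :: "'a::semilattice_inf \<Rightarrow> 'a set \<Rightarrow> bool" where
  "maximal_filter_avoiding b F \<longleftrightarrow> meet_filter F \<and> F \<noteq> {} \<and> b \<notin> F \<and>
     (\<forall>G. meet_filter G \<and> b \<notin> G \<and> F \<subseteq> G \<longrightarrow> G = F)"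

lemma maximal_filter_avoiding_exists:
  fixes a b :: "'a::semilattice_inf"
  assumes "\<not> a \<le> b"
  obtains F where "maximal_filter_avoiding b F" "a \<in> F"
proof -
  let ?\<F> = "{F. meet_filter F \<and> a \<in> F \<and> b \<notin> F}"
  have "{z. a \<le> z} \<in> ?\<F>"
    using assms unfolding meet_filter_def by (auto intro: order_trans)
  then have nonempty: "?\<F> \<noteq> {}" by blast
  have chain: "\<Union>C \<in> ?\<F>" if C: "C \<noteq> {}" "subset.chain ?\<F> C" for C
  proof -
    have "\<And>F. F \<in> C \<Longrightarrow> meet_filter F" "chain\<^sub>\<subseteq> C"
      using C(2) unfolding subset.chain_def chain_subset_def by blast+
    then have "meet_filter (\<Union>C)" by (rule meet_filter_Union_chain)
    moreover have "a \<in> \<Union>C" "b \<notin> \<Union>C" using C unfolding subset.chain_def by blast+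
    ultimately show ?thesis by simp
  qed
  obtain F where F: "F \<in> ?\<F>" and max: "\<forall>G\<in>?\<F>. F \<subseteq> G \<longrightarrow> G = F"
    using subset_Zorn_nonempty[OF nonempty chain] by blast
  have "maximal_filter_avoiding b F"
    unfolding maximal_filter_avoiding_def
  proof (intro conjI allI impI)
    show "meet_filter F" "F \<noteq> {}" "b \<notin> F" using F by auto
    show "G = F" if "meet_filter G \<and> b \<notin> G \<and> F \<subseteq> G" for G
      using that F max by blast
  qed
  with F show ?thesis using that by blast
qed

lemma maximal_filter_avoiding_prime:
  fixes F :: "'a::semilattice_inf set"
  assumes dist: "k_distributive k TYPE('a)" and F: "maximal_filter_avoiding b F"
    and B: "card_less B k" "is_join_of B s" "s \<in> F"
  shows "\<exists>y\<in>B. y \<in> F"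
proof (rule ccontr)
  assume no_y: "\<not> (\<exists>y\<in>B. y \<in> F)"
  have filter: "meet_filter F" "F \<noteq> {}" and "b \<notin> F"
    using F unfolding maximal_filter_avoiding_def by auto
  have "\<forall>y\<in>B. \<exists>f. f \<in> F \<and> inf f y \<le> b"
  proof
    fix y assume "y \<in> B"
    let ?G = "{z. \<exists>f\<in>F. inf f y \<le> z}"
    have "F \<subseteq> ?G" by (auto intro: le_infI1)
    moreover have "y \<in> ?G" using filter(2) by auto
    ultimately have "b \<in> ?G"
      using F meet_filter_extend[OF filter(1)] no_y \<open>y \<in> B\<close>
      unfolding maximal_filter_avoiding_def by blast
    then show "\<exists>f. f \<in> F \<and> inf f y \<le> b" by blast
  qed
  from bchoice[OF this] obtain f where f: "\<forall>y\<in>B. f y \<in> F \<and> inf (f y) y \<le> b"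
    by blast
  have "finite B" using B(1) unfolding card_less_def by simp
  then obtain d where d: "d \<in> F" "d \<le> s" "\<forall>y\<in>B. d \<le> f y"
    using meet_filter_lower_bound[OF filter, of "insert s (f ` B)"] f B(3) by auto
  have "is_join_of (inf d ` B) (inf d s)"
    using dist B(1,2) unfolding k_distributive_iff by blast
  moreover have "\<forall>y\<in>B. inf d y \<le> b"
  proof
    fix y assume "y \<in> B"
    with d(3) have "inf d y \<le> inf (f y) y" by (simp add: inf.coboundedI1)
    with f \<open>y \<in> B\<close> show "inf d y \<le> b" by (blast intro: order_trans)
  qed
  ultimately have "inf d s \<le> b" unfolding is_join_of_def by blast
  then have "b \<in> F"
    using d filter(1) unfolding meet_filter_def by (simp add: inf_absorb1)
  with \<open>b \<notin> F\<close> show False by blast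
qed

lemma maximal_filter_avoiding_game_closed:
  fixes F :: "'a::semilattice_inf set"
  assumes dist: "k_distributive k TYPE('a)" and F: "maximal_filter_avoiding b F"
    and "U \<subseteq> F" and move: "M \<in> game_moves \<alpha> k U"
  shows "\<exists>U'\<in>M. U' \<subseteq> F"
proof -
  have filter: "meet_filter F" "F \<noteq> {}"
    using F unfolding maximal_filter_avoiding_def by auto
  from move show ?thesis
  proof (cases rule: game_movesE)
    case (up a c)
    then show ?thesis using \<open>U \<subseteq> F\<close> filter(1) unfolding meet_filter_def by blast
  next
    case (meet A c)
    then have "c \<in> F"
      using meet_filter_finite_meet[OF filter] \<open>U \<subseteq> F\<close> unfolding card_less_def by blast
    then show ?thesis using meet \<open>U \<subseteq> F\<close> by simp
  next
    case (join B s)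
    then obtain y where "y \<in> B" "y \<in> F"
      using maximal_filter_avoiding_prime[OF dist F] \<open>U \<subseteq> F\<close> by blast
    then show ?thesis using join \<open>U \<subseteq> F\<close> by auto
  qed
qed

lemma k_distributive_imp_omega_strategy:
  fixes a b :: "'a::semilattice_inf"
  assumes "k_distributive k TYPE('a)" "\<not> a \<le> b"
  shows "omega_strategy \<alpha> k {b} {a}"
proof -
  obtain F where F: "maximal_filter_avoiding b F" "a \<in> F"
    using maximal_filter_avoiding_exists[OF assms(2)] .
  show ?thesis
  proof (rule omega_strategy_invariant[where P = "\<lambda>U. U \<subseteq> F"])
    show "{a} \<subseteq> F" using F(2) by simp
    show "U \<inter> {b} = {}" if "U \<subseteq> F" for U
      using that F(1) unfolding maximal_filter_avoiding_def by blast
    show "\<exists>U'\<in>M. U' \<subseteq> F" if "U \<subseteq> F" "M \<in> game_moves \<alpha> k U" for U M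
      using maximal_filter_avoiding_game_closed[OF assms(1) F(1) that] .
  qed
qed

lemma forall_wins_in_five_rounds:
  fixes x s u :: "'a::semilattice_inf"
  assumes join: "is_join_of B s" "card_less B \<beta>"
    and below: "\<forall>y\<in>B. inf x y \<le> u"
  shows "\<not> n_strategy 3 \<beta> {u} 5 {inf x s}"
proof
  let ?a = "inf x s"
  assume "n_strategy 3 \<beta> {u} 5 {?a}"
  then have "n_strategy 3 \<beta> {u} 4 {x, ?a}"
    by (rule n_strategy_forced) (simp_all add: game_moves_upI)
  then have "n_strategy 3 \<beta> {u} 3 {s, x, ?a}"
    by (rule n_strategy_forced) (simp_all add: game_moves_upI[of ?a])
  then have "\<exists>U\<in>{insert y {s, x, ?a} | y. y \<in> B}. n_strategy 3 \<beta> {u} 2 U"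
    by (rule n_strategy_respond) (simp_all add: game_moves_joinI[OF join(2,1)])
  then obtain y where "y \<in> B" and y: "n_strategy 3 \<beta> {u} 2 {y, s, x, ?a}"
    by blast
  have "card_less {x, y} 3"
    unfolding card_less_def by (simp add: card_insert_if numeral_eq_enat)
  moreover have "is_meet_of {x, y} (inf x y)"
    unfolding is_meet_of_def by simp
  ultimately have "{{inf x y, y, s, x, ?a}} \<in> game_moves 3 \<beta> {y, s, x, ?a}"
    using game_moves_meetI[of "{x, y}"] by simp
  with y have "n_strategy 3 \<beta> {u} 1 {inf x y, y, s, x, ?a}"
    by (rule n_strategy_forced) simp
  moreover have "{{u, inf x y, y, s, x, ?a}} \<in> game_moves 3 \<beta> {inf x y, y, s, x, ?a}"
    using game_moves_upI[of "inf x y"] below \<open>y \<in> B\<close> by simp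
  ultimately have "n_strategy 3 \<beta> {u} 0 {u, inf x y, y, s, x, ?a}"
    by (rule n_strategy_forced) simp
  then show False by simp
qed

lemma n_strategy_imp_k_distributive:
  assumes "\<forall>(a::'a::semilattice_inf) b. \<not> a \<le> b \<longrightarrow> n_strategy 3 k {b} 5 {a}"
  shows "k_distributive k TYPE('a)"
  unfolding k_distributive_iff
proof (intro allI impI)
  fix x :: 'a and B :: "'a set" and s :: 'a
  assume B: "card_less B k" "is_join_of B s"
  show "is_join_of (inf x ` B) (inf x s)"
    unfolding is_join_of_def
  proof (intro conjI ballI allI impI)
    show "z \<le> inf x s" if "z \<in> inf x ` B" for z
      using that B(2) unfolding is_join_of_def by (auto intro: le_infI2)
    show "inf x s \<le> u" if "\<forall>z\<in>inf x ` B. z \<le> u" for u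
      using forall_wins_in_five_rounds[OF B(2,1)] that assms by blast
  qed
qed

theorem proposition6p2:
  fixes k :: enat
  assumes "2 \<le> k"
  shows "((\<forall>(a::'a::semilattice_inf) b. \<not> a \<le> b \<longrightarrow>
             (\<forall>m::enat. 2 \<le> m \<longrightarrow> omega_strategy m k {b} {a}))
          \<longleftrightarrow> (\<forall>(a::'a) b. \<not> a \<le> b \<longrightarrow> n_strategy 3 k {b} 5 {a}))
       \<and> ((\<forall>(a::'a) b. \<not> a \<le> b \<longrightarrow> n_strategy 3 k {b} 5 {a})
          \<longleftrightarrow> k_distributive k TYPE('a))"
proof -
  have "(2::enat) \<le> 3" by (simp add: numeral_eq_enat)
  then have "(\<forall>(a::'a) b. \<not> a \<le> b \<longrightarrow> (\<forall>m::enat. 2 \<le> m \<longrightarrow> omega_strategy m k {b} {a}))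
      \<Longrightarrow> (\<forall>(a::'a) b. \<not> a \<le> b \<longrightarrow> n_strategy 3 k {b} 5 {a})"
    using omega_strategy_imp_n_strategy by blast
  moreover have "(\<forall>(a::'a) b. \<not> a \<le> b \<longrightarrow> n_strategy 3 k {b} 5 {a})
      \<Longrightarrow> k_distributive k TYPE('a)"
    by (rule n_strategy_imp_k_distributive)
  moreover have "k_distributive k TYPE('a)
      \<Longrightarrow> (\<forall>(a::'a) b. \<not> a \<le> b \<longrightarrow> (\<forall>m::enat. 2 \<le> m \<longrightarrow> omega_strategy m k {b} {a}))"
    using k_distributive_imp_omega_strategy by blast
  ultimately show ?thesis by blast
qed

end
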